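(* $u_n\le \frac{2+o(1)}{\sqrt{n}}$ as $n\to\infty$; that is, $\limsup_{n\to\infty}\sqrt{n}\,u_n\le 2$.
   Context: For a real orthogonal $n\times n$ matrix $M=(m_{i,j})$ let $u_M:=\max_{1\le i,j\le n}|m_{i,j}|$, and let $u_n:=\min_{M\in O(n)} u_M$, where $O(n)$ denotes the group of real orthogonal $n\times n$ matrices. *)

theory Defs
  imports "HOL-Analysis.Analysis"
begin

text \<open>Real n x n matrices represented as functions nat => nat => real; only the entries
  with indices i, j < n are relevant (indices 0..n-1 instead of 1..n).\<close>

definition orthogonal_mat :: "nat \<Rightarrow> (nat \<Rightarrow> nat \<Rightarrow> real) \<Rightarrow> bool" where
  "orthogonal_mat n M \<longleftrightarrow>
     (\<forall>i<n. \<forall>j<n. (\<Sum>k<n. M i k * M j k) = (if i = j then 1 else 0))"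

definition max_entry :: "nat \<Rightarrow> (nat \<Rightarrow> nat \<Rightarrow> real) \<Rightarrow> real" where
  "max_entry n M = Max {\<bar>M i j\<bar> | i j. i < n \<and> j < n}"

definition u :: "nat \<Rightarrow> real" where
  "u n = Inf (max_entry n ` {M. orthogonal_mat n M})"

end

theory Submission
  imports Defs
begin

text \<open>The orthonormal DCT-IV matrix, with entries
  \<open>sqrt (2/n) * cos ((2j+1)(2k+1)\<pi>/(4n))\<close>, is orthogonal and all its entries are
  bounded by \<open>sqrt (2/n)\<close>, so \<open>sqrt n * u n \<le> sqrt 2 \<le> 2\<close> for every \<open>n \<ge> 1\<close>.
  Orthogonality reduces, via the product-to-sum formula, to the vanishing of
  \<open>\<Sum>j<n. cos ((2j+1)m\<pi>/(2n))\<close> for \<open>0 < \<bar>m\<bar> < 2n\<close>, which follows by multiplying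
  with \<open>2 sin (m\<pi>/(2n))\<close> and telescoping.\<close>

lemma sin_mult_sum_cos_odd:
  fixes t :: real
  shows "2 * sin t * (\<Sum>j<n. cos (real (2*j+1) * t)) = sin (real (2*n) * t)"
proof -
  have step: "2 * sin t * cos (real (2*j+1) * t) = sin (real (2 * Suc j) * t) - sin (real (2*j) * t)"
    for j
  proof -
    have "2 * sin t * cos z = sin (z + t) - sin (z - t)" for z
      by (simp add: sin_add sin_diff)
    moreover have "real (2 * Suc j) * t = real (2*j+1) * t + t" and "real (2*j) * t = real (2*j+1) * t - t"
      by (simp_all add: algebra_simps)
    ultimately show ?thesis by simp
  qed
  have "2 * sin t * (\<Sum>j<n. cos (real (2*j+1) * t))
      = (\<Sum>j<n. sin (real (2 * Suc j) * t) - sin (real (2*j) * t))"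
    by (simp only: sum_distrib_left step)
  also have "\<dots> = sin (real (2*n) * t)"
    by (subst sum_lessThan_telescope[where f = "\<lambda>j. sin (real (2*j) * t)"]) simp
  finally show ?thesis .
qed

lemma sum_cos_odd_multiples_eq_0:
  fixes m :: int
  assumes "m \<noteq> 0" and "\<bar>m\<bar> < 2 * int n"
  shows "(\<Sum>j<n. cos (real (2*j+1) * (of_int m * pi / (2 * real n)))) = 0"
proof -
  define t where "t = of_int m * pi / (2 * real n)"
  have "n > 0" using assms by linarith
  have "\<bar>t\<bar> < pi"
    using assms \<open>n > 0\<close> by (simp add: t_def abs_mult divide_simps)
  moreover have "t \<noteq> 0" using assms \<open>n > 0\<close> by (simp add: t_def)
  ultimately have "sin t \<noteq> 0" by (simp add: sin_zero_pi_iff)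
  moreover have "sin (real (2*n) * t) = 0"
    using \<open>n > 0\<close> by (simp add: t_def mult.commute)
  ultimately show ?thesis
    using sin_mult_sum_cos_odd[of t n] by (simp add: t_def)
qed

definition dct_iv :: "nat \<Rightarrow> nat \<Rightarrow> nat \<Rightarrow> real" where
  "dct_iv n k j = sqrt (2 / real n) * cos (real (2*j+1) * (real (2*k+1) * pi / (4 * real n)))"

lemma dct_iv_mult:
  assumes "n > 0"
  shows "dct_iv n i j * dct_iv n l j
    = (cos (real (2*j+1) * (of_int (int i - int l) * pi / (2 * real n)))
       + cos (real (2*j+1) * (of_int (int (i+l+1)) * pi / (2 * real n)))) / real n"
proof -
  define x where "x = real (2*i+1) * pi / (4 * real n)"
  define y where "y = real (2*l+1) * pi / (4 * real n)"
  have diff: "x - y = of_int (int i - int l) * pi / (2 * real n)"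
    using assms by (simp add: x_def y_def field_simps)
  have add: "x + y = of_int (int (i+l+1)) * pi / (2 * real n)"
    using assms by (simp add: x_def y_def field_simps)
  have prod: "dct_iv n i j * dct_iv n l j
      = 2 / real n * (cos (real (2*j+1) * x) * cos (real (2*j+1) * y))"
  proof -
    have "dct_iv n i j * dct_iv n l j
        = sqrt (2 / real n) * sqrt (2 / real n) * (cos (real (2*j+1) * x) * cos (real (2*j+1) * y))"
      unfolding dct_iv_def x_def y_def by (simp only: mult_ac)
    then show ?thesis by simp
  qed
  have halve: "2 / real n * ((a + b) / 2) = (a + b) / real n" for a b :: real
    using assms by (simp add: field_simps)
  show ?thesis
    unfolding prod cos_times_cos right_diff_distrib[symmetric] distrib_left[symmetric] diff add halve ..
qed

lemma orthogonal_mat_dct_iv: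
  assumes "n > 0"
  shows "orthogonal_mat n (dct_iv n)"
  unfolding orthogonal_mat_def
proof (intro allI impI)
  fix i l assume "i < n" "l < n"
  have diag: "(\<Sum>j<n. cos (real (2*j+1) * (of_int (int i - int l) * pi / (2 * real n))))
      = (if i = l then real n else 0)"
  proof (cases "i = l")
    case False
    then show ?thesis
      using \<open>i < n\<close> \<open>l < n\<close> sum_cos_odd_multiples_eq_0[of "int i - int l" n] by simp
  qed simp
  have off_diag: "(\<Sum>j<n. cos (real (2*j+1) * (of_int (int (i+l+1)) * pi / (2 * real n)))) = 0"
    using \<open>i < n\<close> \<open>l < n\<close> by (intro sum_cos_odd_multiples_eq_0) auto
  have "(\<Sum>j<n. dct_iv n i j * dct_iv n l j)
      = ((\<Sum>j<n. cos (real (2*j+1) * (of_int (int i - int l) * pi / (2 * real n))))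
         + (\<Sum>j<n. cos (real (2*j+1) * (of_int (int (i+l+1)) * pi / (2 * real n))))) / real n"
    by (simp only: dct_iv_mult[OF assms] sum_divide_distrib[symmetric] sum.distrib)
  then show "(\<Sum>j<n. dct_iv n i j * dct_iv n l j) = (if i = l then 1 else 0)"
    using diag off_diag assms by simp
qed

lemma abs_dct_iv_le: "\<bar>dct_iv n k j\<bar> \<le> sqrt (2 / real n)"
  unfolding dct_iv_def by (simp add: abs_mult mult_left_le)

lemma max_entry_eq_Max_image:
  "max_entry n M = Max ((\<lambda>(i, j). \<bar>M i j\<bar>) ` ({..<n} \<times> {..<n}))"
proof -
  have "{\<bar>M i j\<bar> | i j. i < n \<and> j < n} = (\<lambda>(i, j). \<bar>M i j\<bar>) ` ({..<n} \<times> {..<n})"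
    by auto
  then show ?thesis unfolding max_entry_def by simp
qed

lemma max_entry_le:
  assumes "n > 0" and "\<And>i j. i < n \<Longrightarrow> j < n \<Longrightarrow> \<bar>M i j\<bar> \<le> c"
  shows "max_entry n M \<le> c"
  using assms unfolding max_entry_eq_Max_image by (subst Max_le_iff) auto

lemma max_entry_nonneg:
  assumes "n > 0"
  shows "0 \<le> max_entry n M"
proof -
  have "\<bar>M 0 0\<bar> \<le> max_entry n M"
    using assms unfolding max_entry_eq_Max_image by (intro Max_ge) auto
  then show ?thesis by linarith
qed

lemma u_le_max_entry:
  assumes "n > 0" and "orthogonal_mat n M"
  shows "u n \<le> max_entry n M"
  unfolding u_def
proof (rule cInf_lower)
  show "max_entry n M \<in> max_entry n ` {M. orthogonal_mat n M}"
    using assms(2) by simp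
  show "bdd_below (max_entry n ` {M. orthogonal_mat n M})"
    using max_entry_nonneg[OF assms(1)] by (auto intro: bdd_belowI[where m = 0])
qed

lemma u_le_sqrt_2_div:
  assumes "n > 0"
  shows "u n \<le> sqrt (2 / real n)"
  using u_le_max_entry[OF assms orthogonal_mat_dct_iv[OF assms]]
    max_entry_le[where M = "dct_iv n", OF assms abs_dct_iv_le]
  by linarith

theorem theorem2p3:
  shows "limsup (\<lambda>n. ereal (sqrt (real n) * u n)) \<le> 2"
proof (rule Limsup_bounded)
  have bound: "sqrt (real n) * u n \<le> 2" if "n > 0" for n
  proof -
    have "sqrt (real n) * u n \<le> sqrt (real n) * sqrt (2 / real n)"
      using u_le_sqrt_2_div[OF that] by (simp add: mult_left_mono)
    also have "\<dots> = sqrt 2"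
      using that by (simp add: real_sqrt_mult[symmetric])
    also have "\<dots> \<le> 2"
      using real_sqrt_le_mono[of 2 4] by (simp add: real_sqrt_four)
    finally show ?thesis .
  qed
  show "\<forall>\<^sub>F n in sequentially. ereal (sqrt (real n) * u n) \<le> 2"
    by (rule eventually_mono[OF eventually_gt_at_top[of 0]]) (simp add: bound)
qed

end
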